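(* Let $\mathcal{M}=(\mathcal{S},\mathcal{A},\mathcal{P},r,\gamma)$ be a finite MDP with $|\mathcal{S}|=S$, $|\mathcal{A}|=A$, $\gamma\in[0,1)$. Let $\mathcal{F}=\mathbb{R}^{SA}$, let $\|\cdot\|$ be a strictly monotone norm on $\mathbb{R}^{SA}$ (i.e. $Q\geq Q'\geq0$ and $Q\ne Q'$ imply $\|Q\|>\|Q'\|$), let $\mu_0$ be a stationary policy and $f_0\in\mathbb{R}^{SA}$ with $T_{\mu_0}f_0\geq f_0$. Let $(f_k)$, $(\mu_k)$ be generated by Reliable Policy Iteration: for $k=0,1,2,\dots$, $$f_{k+1}\in\arg\max_{f\in\mathcal{F}}\ \|f-f_k\|\quad\text{subject to}\quad T_{\mu_k} f\geq f\geq f_k,$$ and $\mu_{k+1}$ is a deterministic policy greedy with respect to $f_{k+1}$. Then $f_{k+1}=Q_{\mu_k}$ for all $k\ge0$, $f_\infty:=\lim_{k\to\infty}f_k=Q_*$, and any deterministic policy $\mu_\infty$ greedy with respect to $f_\infty$ is optimal.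
   Context: Functions $\mathcal{S}\times\mathcal{A}\to\mathbb{R}$ are identified with vectors in $\mathbb{R}^{SA}$. A stationary policy is a map $\mu:\mathcal{S}\to\Delta(\mathcal{A})$; its Q-value function is $Q_\mu(s,a)=\mathbb{E}[\sum_{t\ge0}\gamma^t r(s_t,a_t)\mid s_0=s,a_0=a]$ with $s_{t+1}\sim\mathcal{P}(\cdot|s_t,a_t)$, $a_{t+1}\sim\mu(\cdot|s_{t+1})$. The Bellman operator is $T_\mu Q(s,a)=r(s,a)+\gamma\sum_{s',a'}\mathcal{P}(s'|s,a)\mu(a'|s')Q(s',a')$. $Q_*$ is the optimal Q-value function. A deterministic policy $\mu$ is greedy with respect to $f$ if $\mu(s)\in\arg\max_a f(s,a)$ for all $s$. Vector inequalities are coordinate-wise. *)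

theory Defs
  imports Complex_Main
begin

text \<open>Q-functions are functions 's \<times> 'a \<Rightarrow> real (= vectors in R^{SA}),
  ordered coordinate-wise (the library order on functions).\<close>

definition is_kernel :: "('s::finite \<Rightarrow> 'a::finite \<Rightarrow> 's \<Rightarrow> real) \<Rightarrow> bool" where
  "is_kernel P \<longleftrightarrow> (\<forall>s a s'. 0 \<le> P s a s') \<and> (\<forall>s a. (\<Sum>s'\<in>UNIV. P s a s') = 1)"

definition is_policy :: "('s::finite \<Rightarrow> 'a::finite \<Rightarrow> real) \<Rightarrow> bool" where
  "is_policy mu \<longleftrightarrow> (\<forall>s a. 0 \<le> mu s a) \<and> (\<forall>s. (\<Sum>a\<in>UNIV. mu s a) = 1)"

definition det_policy :: "('s \<Rightarrow> 'a) \<Rightarrow> ('s \<Rightarrow> 'a \<Rightarrow> real)" where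
  "det_policy d = (\<lambda>s a. if a = d s then 1 else 0)"

definition greedy :: "('s \<Rightarrow> 'a) \<Rightarrow> ('s \<times> 'a \<Rightarrow> real) \<Rightarrow> bool" where
  "greedy d f \<longleftrightarrow> (\<forall>s a. f (s, a) \<le> f (s, d s))"

definition bellman ::
  "('s::finite \<Rightarrow> 'a::finite \<Rightarrow> 's \<Rightarrow> real) \<Rightarrow> ('s \<Rightarrow> 'a \<Rightarrow> real) \<Rightarrow> real
    \<Rightarrow> ('s \<Rightarrow> 'a \<Rightarrow> real) \<Rightarrow> ('s \<times> 'a \<Rightarrow> real) \<Rightarrow> ('s \<times> 'a \<Rightarrow> real)" where
  "bellman P r gamma mu Q = (\<lambda>(s, a). r s a +
      gamma * (\<Sum>s'\<in>UNIV. \<Sum>a'\<in>UNIV. P s a s' * mu s' a' * Q (s', a')))"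

text \<open>n-step transition probabilities of the state-action chain
  (s_t,a_t) \<rightarrow> (s_{t+1},a_{t+1}) with s_{t+1} ~ P(.|s_t,a_t), a_{t+1} ~ mu(.|s_{t+1}).\<close>
fun nstep ::
  "('s::finite \<Rightarrow> 'a::finite \<Rightarrow> 's \<Rightarrow> real) \<Rightarrow> ('s \<Rightarrow> 'a \<Rightarrow> real) \<Rightarrow> nat
    \<Rightarrow> 's \<times> 'a \<Rightarrow> 's \<times> 'a \<Rightarrow> real" where
  "nstep P mu 0 x y = (if x = y then 1 else 0)"
| "nstep P mu (Suc n) (s, a) y =
     (\<Sum>s'\<in>UNIV. \<Sum>a'\<in>UNIV. P s a s' * mu s' a' * nstep P mu n (s', a') y)"

text \<open>Q-value function Q_mu(s,a) = E[ sum_t gamma^t r(s_t,a_t) | s_0=s, a_0=a ],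
  written via the n-step distributions of the chain.\<close>
definition Qpol ::
  "('s::finite \<Rightarrow> 'a::finite \<Rightarrow> 's \<Rightarrow> real) \<Rightarrow> ('s \<Rightarrow> 'a \<Rightarrow> real) \<Rightarrow> real
    \<Rightarrow> ('s \<Rightarrow> 'a \<Rightarrow> real) \<Rightarrow> ('s \<times> 'a \<Rightarrow> real)" where
  "Qpol P r gamma mu = (\<lambda>x. \<Sum>t. gamma ^ t * (\<Sum>y\<in>UNIV. nstep P mu t x y * r (fst y) (snd y)))"

definition Qstar ::
  "('s::finite \<Rightarrow> 'a::finite \<Rightarrow> 's \<Rightarrow> real) \<Rightarrow> ('s \<Rightarrow> 'a \<Rightarrow> real) \<Rightarrow> real
    \<Rightarrow> ('s \<times> 'a \<Rightarrow> real)" where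
  "Qstar P r gamma = (\<lambda>x. SUP mu\<in>{mu. is_policy mu}. Qpol P r gamma mu x)"

definition optimal_policy ::
  "('s::finite \<Rightarrow> 'a::finite \<Rightarrow> 's \<Rightarrow> real) \<Rightarrow> ('s \<Rightarrow> 'a \<Rightarrow> real) \<Rightarrow> real
    \<Rightarrow> ('s \<Rightarrow> 'a \<Rightarrow> real) \<Rightarrow> bool" where
  "optimal_policy P r gamma mu \<longleftrightarrow> Qpol P r gamma mu = Qstar P r gamma"

definition is_norm :: "(('s \<times> 'a \<Rightarrow> real) \<Rightarrow> real) \<Rightarrow> bool" where
  "is_norm N \<longleftrightarrow> (\<forall>x. 0 \<le> N x) \<and> (\<forall>x. N x = 0 \<longleftrightarrow> x = (\<lambda>_. 0))
     \<and> (\<forall>c x. N (\<lambda>i. c * x i) = \<bar>c\<bar> * N x)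
     \<and> (\<forall>x y. N (\<lambda>i. x i + y i) \<le> N x + N y)"

definition strictly_monotone_norm :: "(('s \<times> 'a \<Rightarrow> real) \<Rightarrow> real) \<Rightarrow> bool" where
  "strictly_monotone_norm N \<longleftrightarrow>
     (\<forall>Q Q'. Q' \<le> Q \<and> (\<lambda>_. 0) \<le> Q' \<and> Q \<noteq> Q' \<longrightarrow> N Q' < N Q)"

definition rpi_feasible ::
  "('s::finite \<Rightarrow> 'a::finite \<Rightarrow> 's \<Rightarrow> real) \<Rightarrow> ('s \<Rightarrow> 'a \<Rightarrow> real) \<Rightarrow> real
    \<Rightarrow> ('s \<Rightarrow> 'a \<Rightarrow> real) \<Rightarrow> ('s \<times> 'a \<Rightarrow> real) \<Rightarrow> ('s \<times> 'a \<Rightarrow> real) \<Rightarrow> bool" where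
  "rpi_feasible P r gamma mu fk g \<longleftrightarrow> g \<le> bellman P r gamma mu g \<and> fk \<le> g"

end

(*
  Q_mu is a fixed point of T_mu, and since T_mu is a monotone gamma-contraction every g with
  T_mu g \<ge> g lies below it. Hence, as long as T_(mu_k) f_k \<ge> f_k, the point Q_(mu_k) is
  feasible for the k-th RPI step and dominates every feasible point; strict monotonicity of the
  norm then forces the maximiser f_(k+1) to be Q_(mu_k). Greediness of mu_(k+1) with respect to
  Q_(mu_k) gives T_(mu_(k+1)) Q_(mu_k) \<ge> Q_(mu_k), so the invariant propagates and RPI
  reproduces exact policy iteration. Policy iteration is monotone and its error against any
  policy shrinks by a factor gamma per step, so Q_(mu_k) converges to Q_star; a policy greedy
  with respect to Q_star satisfies T_mu Q_star \<ge> Q_star and is therefore optimal.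
*)

theory Submission
  imports Defs
begin

definition expected_next ::
  "('s::finite \<Rightarrow> 'a::finite \<Rightarrow> 's \<Rightarrow> real) \<Rightarrow> ('s \<Rightarrow> 'a \<Rightarrow> real) \<Rightarrow> ('s \<times> 'a \<Rightarrow> real)
    \<Rightarrow> 's \<Rightarrow> 'a \<Rightarrow> real" where
  "expected_next P mu h s a = (\<Sum>s'\<in>UNIV. \<Sum>a'\<in>UNIV. P s a s' * mu s' a' * h (s', a'))"

lemma bellman_expected_next:
  "bellman P r gamma mu Q (s, a) = r s a + gamma * expected_next P mu Q s a"
  by (simp add: bellman_def expected_next_def)

lemma is_policy_det_policy: "is_policy (det_policy (d :: 's::finite \<Rightarrow> 'a::finite))"
  by (simp add: is_policy_def det_policy_def)

lemma expected_next_add: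
  "expected_next P mu (\<lambda>y. h y + h' y) s a = expected_next P mu h s a + expected_next P mu h' s a"
  unfolding expected_next_def by (simp add: algebra_simps sum.distrib)

lemma expected_next_diff:
  "expected_next P mu (\<lambda>y. h y - h' y) s a = expected_next P mu h s a - expected_next P mu h' s a"
  unfolding expected_next_def by (simp add: algebra_simps sum_subtractf)

lemma expected_next_const:
  assumes "is_kernel P" "is_policy mu"
  shows "expected_next P mu (\<lambda>_. c) s a = c"
proof -
  have "expected_next P mu (\<lambda>_. c) s a = (\<Sum>s'\<in>UNIV. P s a s' * (\<Sum>a'\<in>UNIV. mu s' a')) * c"
    unfolding expected_next_def by (simp add: sum_distrib_left sum_distrib_right)
  then show ?thesis
    using assms by (simp add: is_kernel_def is_policy_def)
qed

lemma expected_next_add_const: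
  assumes "is_kernel P" "is_policy mu"
  shows "expected_next P mu (\<lambda>y. h y + c) s a = expected_next P mu h s a + c"
  by (simp add: expected_next_add expected_next_const[OF assms])

lemma expected_next_mono:
  assumes "is_kernel P" "is_policy mu" "\<And>y. h y \<le> h' y"
  shows "expected_next P mu h s a \<le> expected_next P mu h' s a"
  unfolding expected_next_def
  using assms by (intro sum_mono mult_left_mono) (auto simp: is_kernel_def is_policy_def)

lemma expected_next_le_const:
  assumes "is_kernel P" "is_policy mu" "\<And>y. h y \<le> c"
  shows "expected_next P mu h s a \<le> c"
  using expected_next_mono[OF assms(1,2), of h "\<lambda>_. c"] assms(3)
  by (simp add: expected_next_const[OF assms(1,2)])

lemma expected_next_le_greedy:
  assumes "is_kernel P" "is_policy mu" "greedy d h"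
  shows "expected_next P mu h s a \<le> expected_next P (det_policy d) h s a"
proof -
  have "(\<Sum>a'\<in>UNIV. mu s' a' * h (s', a')) \<le> h (s', d s')" for s'
  proof -
    have "(\<Sum>a'\<in>UNIV. mu s' a' * h (s', a')) \<le> (\<Sum>a'\<in>UNIV. mu s' a' * h (s', d s'))"
      using assms(2,3) by (intro sum_mono mult_left_mono) (auto simp: is_policy_def greedy_def)
    also have "\<dots> = h (s', d s')"
      using assms(2) by (simp add: is_policy_def flip: sum_distrib_right)
    finally show ?thesis .
  qed
  then have "(\<Sum>s'\<in>UNIV. P s a s' * (\<Sum>a'\<in>UNIV. mu s' a' * h (s', a')))
      \<le> (\<Sum>s'\<in>UNIV. P s a s' * h (s', d s'))"
    using assms(1) by (intro sum_mono mult_left_mono) (auto simp: is_kernel_def)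
  then have "expected_next P mu h s a \<le> (\<Sum>s'\<in>UNIV. P s a s' * h (s', d s'))"
    by (simp add: expected_next_def sum_distrib_left mult.assoc)
  also have "\<dots> = expected_next P (det_policy d) h s a"
    by (simp add: expected_next_def det_policy_def if_distrib if_distribR cong: if_cong)
  finally show ?thesis .
qed

lemma nstep_Suc_sum:
  "(\<Sum>y\<in>UNIV. nstep P mu (Suc t) (s, a) y * w y)
     = expected_next P mu (\<lambda>x. \<Sum>y\<in>UNIV. nstep P mu t x y * w y) s a"
proof -
  have "(\<Sum>y\<in>UNIV. nstep P mu (Suc t) (s, a) y * w y)
      = (\<Sum>y\<in>UNIV. \<Sum>s'\<in>UNIV. \<Sum>a'\<in>UNIV. P s a s' * mu s' a' * (nstep P mu t (s', a') y * w y))"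
    by (simp add: sum_distrib_right mult.assoc)
  also have "\<dots> = (\<Sum>s'\<in>UNIV. \<Sum>a'\<in>UNIV. \<Sum>y\<in>UNIV. P s a s' * mu s' a' * (nstep P mu t (s', a') y * w y))"
    by (subst sum.swap) (rule sum.cong[OF refl sum.swap])
  finally show ?thesis
    by (simp add: expected_next_def sum_distrib_left)
qed

lemma nstep_nonneg:
  assumes "is_kernel P" "is_policy mu"
  shows "0 \<le> nstep P mu n x y"
proof (induction n arbitrary: x)
  case (Suc n)
  then show ?case
    using assms by (cases x) (auto simp: is_kernel_def is_policy_def intro!: sum_nonneg)
qed simp

lemma nstep_sum_eq_1:
  assumes "is_kernel P" "is_policy mu"
  shows "(\<Sum>y\<in>UNIV. nstep P mu n x y) = 1"
proof (induction n arbitrary: x)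
  case (Suc n)
  then show ?case
    using nstep_Suc_sum[of P mu n _ _ "\<lambda>_. 1"]
    by (cases x) (simp add: expected_next_const[OF assms])
qed simp

lemma nstep_le_1:
  assumes "is_kernel P" "is_policy mu"
  shows "nstep P mu n x y \<le> 1"
  using member_le_sum[of y UNIV "nstep P mu n x"] nstep_nonneg[OF assms] nstep_sum_eq_1[OF assms]
  by simp

definition reward_abs_sum :: "('s::finite \<Rightarrow> 'a::finite \<Rightarrow> real) \<Rightarrow> real" where
  "reward_abs_sum r = (\<Sum>y\<in>UNIV. \<bar>r (fst y) (snd y)\<bar>)"

lemma abs_expected_reward_le:
  assumes "is_kernel P" "is_policy mu"
  shows "\<bar>\<Sum>y\<in>UNIV. nstep P mu t x y * r (fst y) (snd y)\<bar> \<le> reward_abs_sum r"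
proof -
  have "\<bar>nstep P mu t x y * r (fst y) (snd y)\<bar> \<le> \<bar>r (fst y) (snd y)\<bar>" for y
    using nstep_nonneg[OF assms] nstep_le_1[OF assms]
    by (simp add: abs_mult mult_left_le_one_le)
  then show ?thesis
    unfolding reward_abs_sum_def by (rule order_trans[OF sum_abs sum_mono])
qed

lemma Qpol_sums:
  assumes "is_kernel P" "is_policy mu" "0 \<le> gamma" "gamma < 1"
  shows "(\<lambda>t. gamma ^ t * (\<Sum>y\<in>UNIV. nstep P mu t x y * r (fst y) (snd y))) sums Qpol P r gamma mu x"
proof -
  have "summable (\<lambda>t. gamma ^ t * reward_abs_sum r)"
    using assms(3,4) by (intro summable_mult2 summable_geometric) simp
  moreover have "norm (gamma ^ t * (\<Sum>y\<in>UNIV. nstep P mu t x y * r (fst y) (snd y)))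
      \<le> gamma ^ t * reward_abs_sum r" for t
    using abs_expected_reward_le[OF assms(1,2)] assms(3) by (simp add: abs_mult mult_left_mono)
  ultimately show ?thesis
    unfolding Qpol_def by (blast intro: summable_sums summable_comparison_test')
qed

lemma abs_Qpol_le:
  assumes "is_kernel P" "is_policy mu" "0 \<le> gamma" "gamma < 1"
  shows "\<bar>Qpol P r gamma mu x\<bar> \<le> reward_abs_sum r / (1 - gamma)"
proof -
  have geom: "(\<lambda>t. gamma ^ t * reward_abs_sum r) sums (reward_abs_sum r / (1 - gamma))"
    using sums_mult2[OF geometric_sums, of gamma "reward_abs_sum r"] assms(3,4) by simp
  have bound: "\<bar>gamma ^ t * (\<Sum>y\<in>UNIV. nstep P mu t x y * r (fst y) (snd y))\<bar>
      \<le> gamma ^ t * reward_abs_sum r" for t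
    using abs_expected_reward_le[OF assms(1,2)] assms(3) by (simp add: abs_mult mult_left_mono)
  have "- (gamma ^ t * reward_abs_sum r)
      \<le> gamma ^ t * (\<Sum>y\<in>UNIV. nstep P mu t x y * r (fst y) (snd y))"
    and "gamma ^ t * (\<Sum>y\<in>UNIV. nstep P mu t x y * r (fst y) (snd y))
      \<le> gamma ^ t * reward_abs_sum r" for t
    using bound[of t] unfolding abs_le_iff by linarith+
  then have "- (reward_abs_sum r / (1 - gamma)) \<le> Qpol P r gamma mu x"
    and "Qpol P r gamma mu x \<le> reward_abs_sum r / (1 - gamma)"
    by (intro sums_le[OF _ sums_minus[OF geom] Qpol_sums[OF assms]]
        sums_le[OF _ Qpol_sums[OF assms] geom]; simp)+
  then show ?thesis
    by simp
qed

lemma Qpol_eq_bellman: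
  assumes "is_kernel P" "is_policy mu" "0 \<le> gamma" "gamma < 1"
  shows "Qpol P r gamma mu (s, a) = r s a + gamma * expected_next P mu (Qpol P r gamma mu) s a"
proof -
  define summand where "summand x t = gamma ^ t * (\<Sum>y\<in>UNIV. nstep P mu t x y * r (fst y) (snd y))" for x t
  have sums: "summand x sums Qpol P r gamma mu x" for x
    unfolding summand_def by (rule Qpol_sums[OF assms])
  have "summand (s, a) (Suc t) = gamma * expected_next P mu (\<lambda>x. summand x t) s a" for t
    unfolding summand_def nstep_Suc_sum expected_next_def by (simp add: sum_distrib_left algebra_simps)
  moreover have "(\<lambda>t. gamma * expected_next P mu (\<lambda>x. summand x t) s a)
      sums (gamma * expected_next P mu (Qpol P r gamma mu) s a)"
    unfolding expected_next_def by (intro sums_mult sums_sum sums)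
  ultimately have "(\<lambda>t. summand (s, a) (Suc t)) sums (gamma * expected_next P mu (Qpol P r gamma mu) s a)"
    by simp
  moreover have "(\<Sum>y\<in>UNIV. nstep P mu 0 (s, a) y * r (fst y) (snd y)) = r s a"
    by (simp add: if_distrib if_distribR cong: if_cong)
  then have "summand (s, a) 0 = r s a"
    by (simp add: summand_def)
  ultimately show ?thesis
    using sums_unique2[OF sums] by (simp add: sums_Suc_iff add.commute)
qed

lemma bellman_Qpol:
  assumes "is_kernel P" "is_policy mu" "0 \<le> gamma" "gamma < 1"
  shows "bellman P r gamma mu (Qpol P r gamma mu) = Qpol P r gamma mu"
  by (rule ext) (auto simp: bellman_expected_next Qpol_eq_bellman[OF assms])

text \<open>Maximum principle: the largest entry m of g - Q_mu satisfies m \<le> gamma m, so m \<le> 0.\<close>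
lemma le_Qpol_if_le_bellman:
  assumes "is_kernel P" "is_policy mu" "0 \<le> gamma" "gamma < 1"
    and "g \<le> bellman P r gamma mu g"
  shows "g \<le> Qpol P r gamma mu"
proof -
  define D where "D x = g x - Qpol P r gamma mu x" for x
  define m where "m = Max (range D)"
  have D_le: "D x \<le> m" for x
    unfolding m_def by simp
  have "m \<in> range D"
    unfolding m_def by (rule Max_in) auto
  then obtain s a where m_eq: "D (s, a) = m"
    by (metis rangeE surj_pair)
  have "g (s, a) \<le> bellman P r gamma mu g (s, a)"
    using assms(5) by (rule le_funD)
  then have "D (s, a) \<le> gamma * expected_next P mu D s a"
    unfolding D_def expected_next_diff bellman_expected_next Qpol_eq_bellman[OF assms(1-4)]
    by (simp add: algebra_simps)
  also have "\<dots> \<le> gamma * m"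
    using expected_next_le_const[OF assms(1,2) D_le] assms(3) by (rule mult_left_mono)
  finally have "m \<le> 0"
    using m_eq assms(4) by (simp add: mult_le_cancel_right1)
  then show ?thesis
    using order_trans[OF D_le \<open>m \<le> 0\<close>] unfolding D_def le_fun_def by simp
qed

lemma Qpol_le_Qstar:
  assumes "is_kernel P" "is_policy mu" "0 \<le> gamma" "gamma < 1"
  shows "Qpol P r gamma mu x \<le> Qstar P r gamma x"
  unfolding Qstar_def
proof (rule cSUP_upper)
  show "bdd_above ((\<lambda>mu. Qpol P r gamma mu x) ` {mu. is_policy mu})"
    using abs_Qpol_le[OF assms(1) _ assms(3,4)]
    by (intro bdd_aboveI[of _ "reward_abs_sum r / (1 - gamma)"]) (blast dest: abs_le_D1)
qed (use assms(2) in simp)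

lemma Qstar_le:
  assumes "\<And>mu. is_policy mu \<Longrightarrow> Qpol P r gamma mu x \<le> c"
  shows "Qstar P r gamma x \<le> c"
  unfolding Qstar_def by (rule cSUP_least) (auto intro: assms is_policy_det_policy)

lemma Qpol_le_bellman_greedy:
  assumes "is_kernel P" "is_policy mu" "0 \<le> gamma" "gamma < 1"
    and "greedy d (Qpol P r gamma mu)"
  shows "Qpol P r gamma mu \<le> bellman P r gamma (det_policy d) (Qpol P r gamma mu)"
  using expected_next_le_greedy[OF assms(1,2,5)] assms(3)
  by (auto simp: le_fun_def bellman_expected_next Qpol_eq_bellman[OF assms(1-4)] mult_left_mono)

lemma Qpol_le_Qpol_greedy:
  assumes "is_kernel P" "is_policy mu" "0 \<le> gamma" "gamma < 1"
    and "greedy d (Qpol P r gamma mu)"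
  shows "Qpol P r gamma mu \<le> Qpol P r gamma (det_policy d)"
  by (rule le_Qpol_if_le_bellman[OF assms(1) is_policy_det_policy assms(3,4)])
    (rule Qpol_le_bellman_greedy[OF assms])

definition policy_iteration ::
  "('s::finite \<Rightarrow> 'a::finite \<Rightarrow> 's \<Rightarrow> real) \<Rightarrow> ('s \<Rightarrow> 'a \<Rightarrow> real) \<Rightarrow> real
    \<Rightarrow> (nat \<Rightarrow> 's \<Rightarrow> 'a \<Rightarrow> real) \<Rightarrow> bool" where
  "policy_iteration P r gamma mu \<longleftrightarrow> is_policy (mu 0) \<and>
     (\<forall>k. \<exists>d. mu (Suc k) = det_policy d \<and> greedy d (Qpol P r gamma (mu k)))"

lemma policy_iteration_is_policy:
  assumes "policy_iteration P r gamma mu"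
  shows "is_policy (mu k)"
  using assms unfolding policy_iteration_def by (cases k) (metis is_policy_det_policy)+

lemma policy_iteration_mono:
  assumes "is_kernel P" "0 \<le> gamma" "gamma < 1" "policy_iteration P r gamma mu"
  shows "Qpol P r gamma (mu k) \<le> Qpol P r gamma (mu (Suc k))"
  using assms(4) Qpol_le_Qpol_greedy[OF assms(1) policy_iteration_is_policy[OF assms(4)] assms(2,3)]
  unfolding policy_iteration_def by metis

lemma policy_iteration_error:
  assumes "is_kernel P" "0 \<le> gamma" "gamma < 1"
    and "policy_iteration P r gamma mu" "is_policy nu"
  shows "Qpol P r gamma nu x
    \<le> Qpol P r gamma (mu k) x + gamma ^ k * (2 * reward_abs_sum r / (1 - gamma))"
proof -
  define B where "B = 2 * reward_abs_sum r / (1 - gamma)"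
  define Q where "Q k = Qpol P r gamma (mu k)" for k
  have pol: "is_policy (mu k)" for k
    by (rule policy_iteration_is_policy[OF assms(4)])
  have Q_eq: "Q k (s, a) = r s a + gamma * expected_next P (mu k) (Q k) s a" for k s a
    unfolding Q_def by (rule Qpol_eq_bellman[OF assms(1) pol assms(2,3)])
  show ?thesis
    using assms(5) unfolding B_def[symmetric] Q_def[symmetric]
  proof (induction k arbitrary: nu x)
    case 0
    then show ?case
      using abs_Qpol_le[OF assms(1) _ assms(2,3), of nu r x]
        abs_Qpol_le[OF assms(1) pol[of 0] assms(2,3), of r x]
      unfolding Q_def B_def by (simp add: abs_le_iff)
  next
    case (Suc k)
    \<comment> \<open>Q_nu = T_nu Q_nu \<le> T_nu Q_k + gamma^(k+1) B \<le> T_(mu_(k+1)) Q_k + ... \<le> T_(mu_(k+1)) Q_(k+1) + ...\<close>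
    obtain d where d: "mu (Suc k) = det_policy d" "greedy d (Q k)"
      using assms(4) unfolding policy_iteration_def Q_def by blast
    obtain s a where x: "x = (s, a)"
      by fastforce
    have "expected_next P nu (Qpol P r gamma nu) s a
        \<le> expected_next P nu (\<lambda>y. Q k y + gamma ^ k * B) s a"
      using Suc by (intro expected_next_mono[OF assms(1) Suc.prems])
    also have "\<dots> = expected_next P nu (Q k) s a + gamma ^ k * B"
      by (rule expected_next_add_const[OF assms(1) Suc.prems])
    also have "expected_next P nu (Q k) s a \<le> expected_next P (mu (Suc k)) (Q k) s a"
      unfolding d(1) by (rule expected_next_le_greedy[OF assms(1) Suc.prems d(2)])
    also have "\<dots> \<le> expected_next P (mu (Suc k)) (Q (Suc k)) s a"
      using policy_iteration_mono[OF assms(1-4)] unfolding Q_def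
      by (intro expected_next_mono[OF assms(1) pol]) (rule le_funD)
    finally have "gamma * expected_next P nu (Qpol P r gamma nu) s a
        \<le> gamma * (expected_next P (mu (Suc k)) (Q (Suc k)) s a + gamma ^ k * B)"
      using assms(2) by (simp add: mult_left_mono)
    then show ?case
      unfolding x Q_eq Qpol_eq_bellman[OF assms(1) Suc.prems assms(2,3)]
      by (simp add: distrib_left mult.assoc)
  qed
qed

lemma policy_iteration_tendsto_Qstar:
  assumes "is_kernel P" "0 \<le> gamma" "gamma < 1" "policy_iteration P r gamma mu"
  shows "(\<lambda>k. Qpol P r gamma (mu k) x) \<longlonglongrightarrow> Qstar P r gamma x"
proof (rule tendsto_sandwich)
  define B where "B = 2 * reward_abs_sum r / (1 - gamma)"
  have "Qstar P r gamma x \<le> Qpol P r gamma (mu k) x + gamma ^ k * B" for k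
    unfolding B_def by (intro Qstar_le policy_iteration_error[OF assms(1-4)])
  then show "\<forall>\<^sub>F k in sequentially. Qstar P r gamma x - gamma ^ k * B \<le> Qpol P r gamma (mu k) x"
    by (simp add: algebra_simps)
  show "\<forall>\<^sub>F k in sequentially. Qpol P r gamma (mu k) x \<le> Qstar P r gamma x"
    using Qpol_le_Qstar[OF assms(1) policy_iteration_is_policy[OF assms(4)] assms(2,3)] by simp
  have "(\<lambda>k. gamma ^ k) \<longlonglongrightarrow> 0"
    using assms(2,3) by (intro LIMSEQ_power_zero) auto
  then have "(\<lambda>k. Qstar P r gamma x - gamma ^ k * B) \<longlonglongrightarrow> Qstar P r gamma x - 0 * B"
    by (intro tendsto_diff tendsto_mult tendsto_const)
  then show "(\<lambda>k. Qstar P r gamma x - gamma ^ k * B) \<longlonglongrightarrow> Qstar P r gamma x"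
    by simp
qed simp

text \<open>Q_star is a limit of policy values from below, so greediness with respect to it makes
  it a subsolution of the Bellman equation of the greedy policy.\<close>
lemma greedy_Qstar_optimal:
  assumes "is_kernel P" "0 \<le> gamma" "gamma < 1"
    and pol: "\<And>k. is_policy (mu k)"
    and conv: "\<And>x. (\<lambda>k. Qpol P r gamma (mu k) x) \<longlonglongrightarrow> Qstar P r gamma x"
    and greedy: "greedy d (Qstar P r gamma)"
  shows "optimal_policy P r gamma (det_policy d)"
proof -
  have "Qstar P r gamma (s, a) \<le> bellman P r gamma (det_policy d) (Qstar P r gamma) (s, a)" for s a
  proof (rule LIMSEQ_le_const2[OF conv], intro exI allI impI)
    fix k
    have "expected_next P (mu k) (Qpol P r gamma (mu k)) s a \<le> expected_next P (mu k) (Qstar P r gamma) s a"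
      using Qpol_le_Qstar[OF assms(1) pol assms(2,3)] by (intro expected_next_mono[OF assms(1) pol])
    also have "\<dots> \<le> expected_next P (det_policy d) (Qstar P r gamma) s a"
      by (rule expected_next_le_greedy[OF assms(1) pol greedy])
    finally show "Qpol P r gamma (mu k) (s, a) \<le> bellman P r gamma (det_policy d) (Qstar P r gamma) (s, a)"
      unfolding Qpol_eq_bellman[OF assms(1) pol assms(2,3)] bellman_expected_next
      using assms(2) by (simp add: mult_left_mono)
  qed
  then have "Qstar P r gamma \<le> Qpol P r gamma (det_policy d)"
    by (intro le_Qpol_if_le_bellman[OF assms(1) is_policy_det_policy assms(2,3)]) (auto simp: le_fun_def)
  moreover have "Qpol P r gamma (det_policy d) \<le> Qstar P r gamma"
    using Qpol_le_Qstar[OF assms(1) is_policy_det_policy assms(2,3)] by (simp add: le_fun_def)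
  ultimately show ?thesis
    unfolding optimal_policy_def by simp
qed

lemma strictly_monotone_norm_eq_if_le:
  assumes "strictly_monotone_norm N" "h \<le> g" "g \<le> Q"
    and "N (\<lambda>x. Q x - h x) \<le> N (\<lambda>x. g x - h x)"
  shows "g = Q"
proof (rule ccontr)
  assume "g \<noteq> Q"
  then have "(\<lambda>x. Q x - h x) \<noteq> (\<lambda>x. g x - h x)"
    by (simp add: fun_eq_iff) metis
  moreover have "(\<lambda>x. g x - h x) \<le> (\<lambda>x. Q x - h x)" "(\<lambda>_. 0) \<le> (\<lambda>x. g x - h x)"
    using assms(2,3) by (auto simp: le_fun_def)
  ultimately have "N (\<lambda>x. g x - h x) < N (\<lambda>x. Q x - h x)"
    using assms(1) unfolding strictly_monotone_norm_def by blast
  with assms(4) show False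
    by simp
qed

text \<open>Q_mu is feasible and dominates every feasible point, so a norm-maximal feasible
  point must be Q_mu.\<close>
lemma rpi_step_eq_Qpol:
  assumes "is_kernel P" "is_policy mu" "0 \<le> gamma" "gamma < 1" "strictly_monotone_norm N"
    and "fk \<le> bellman P r gamma mu fk"
    and "rpi_feasible P r gamma mu fk g"
    and "\<forall>h. rpi_feasible P r gamma mu fk h \<longrightarrow> N (\<lambda>x. h x - fk x) \<le> N (\<lambda>x. g x - fk x)"
  shows "g = Qpol P r gamma mu"
proof (rule strictly_monotone_norm_eq_if_le[OF assms(5)])
  have g: "g \<le> bellman P r gamma mu g" "fk \<le> g"
    using assms(7) unfolding rpi_feasible_def by simp_all
  then show "fk \<le> g" "g \<le> Qpol P r gamma mu"
    using le_Qpol_if_le_bellman[OF assms(1-4)] by simp_all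
  have "rpi_feasible P r gamma mu fk (Qpol P r gamma mu)"
    using le_Qpol_if_le_bellman[OF assms(1-4,6)] bellman_Qpol[OF assms(1-4)]
    unfolding rpi_feasible_def by simp
  then show "N (\<lambda>x. Qpol P r gamma mu x - fk x) \<le> N (\<lambda>x. g x - fk x)"
    using assms(8) by simp
qed

theorem theorem2:
  fixes P :: "'s::finite \<Rightarrow> 'a::finite \<Rightarrow> 's \<Rightarrow> real"
    and r :: "'s \<Rightarrow> 'a \<Rightarrow> real"
    and gamma :: real
    and N :: "('s \<times> 'a \<Rightarrow> real) \<Rightarrow> real"
    and f :: "nat \<Rightarrow> ('s \<times> 'a \<Rightarrow> real)"
    and mu :: "nat \<Rightarrow> ('s \<Rightarrow> 'a \<Rightarrow> real)"
  assumes kernel: "is_kernel P"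
    and gamma: "0 \<le> gamma" "gamma < 1"
    and norm: "is_norm N" "strictly_monotone_norm N"
    and init_pol: "is_policy (mu 0)"
    and init: "f 0 \<le> bellman P r gamma (mu 0) (f 0)"
    and step_f: "\<forall>k. rpi_feasible P r gamma (mu k) (f k) (f (Suc k)) \<and>
                    (\<forall>g. rpi_feasible P r gamma (mu k) (f k) g \<longrightarrow>
                         N (\<lambda>x. g x - f k x) \<le> N (\<lambda>x. f (Suc k) x - f k x))"
    and step_mu: "\<forall>k. \<exists>d. mu (Suc k) = det_policy d \<and> greedy d (f (Suc k))"
  shows "(\<forall>k. f (Suc k) = Qpol P r gamma (mu k))
       \<and> (\<forall>x. (\<lambda>k. f k x) \<longlonglongrightarrow> Qstar P r gamma x)
       \<and> (\<forall>d. greedy d (Qstar P r gamma) \<longrightarrow> optimal_policy P r gamma (det_policy d))"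
proof -
  have pol: "is_policy (mu k)" for k
    using init_pol step_mu by (cases k) (metis is_policy_det_policy)+
  note step_eq = rpi_step_eq_Qpol[OF kernel pol gamma norm(2) _ step_f[rule_format, THEN conjunct1]
      step_f[rule_format, THEN conjunct2]]
  have "f k \<le> bellman P r gamma (mu k) (f k)" for k
  proof (induction k)
    case (Suc k)
    then show ?case
      using step_mu step_eq[OF Suc] Qpol_le_bellman_greedy[OF kernel pol gamma] by metis
  qed (rule init)
  then have f_Suc: "f (Suc k) = Qpol P r gamma (mu k)" for k
    by (rule step_eq)
  then have "policy_iteration P r gamma mu"
    using init_pol step_mu unfolding policy_iteration_def by metis
  then have conv: "(\<lambda>k. Qpol P r gamma (mu k) x) \<longlonglongrightarrow> Qstar P r gamma x" for x
    by (rule policy_iteration_tendsto_Qstar[OF kernel gamma])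
  have "(\<lambda>k. f k x) \<longlonglongrightarrow> Qstar P r gamma x" for x
    using conv[of x] unfolding f_Suc[symmetric] by (rule LIMSEQ_imp_Suc)
  then show ?thesis
    using f_Suc greedy_Qstar_optimal[OF kernel gamma pol conv] by blast
qed

end
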